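(* For every integer $n \geq 63$, $$\mathrm{ex}(n, C_{13}) \leq \frac{3(n-3)}{2}.$$
   Context: A linear $3$-graph $G=(V,E)$ consists of a finite vertex set $V$ and a collection $E$ of $3$-element subsets of $V$ (edges) such that any two distinct edges share at most one vertex. The crown $C_{13}$ is the linear $3$-graph on $9$ vertices $\{a,b,c,d,e,f,g,h,i\}$ with edges $\{a,b,c\},\{a,d,e\},\{b,f,g\},\{c,h,i\}$. A linear $3$-graph is $C_{13}$-free if it contains no copy of $C_{13}$. The linear Turán number $\mathrm{ex}(n, C_{13})$ is the maximum number of edges in a $C_{13}$-free linear $3$-graph on $n$ vertices. *)

theory Defs
  imports Complex_Main
begin

definition linear_3graph :: "'a set \<Rightarrow> 'a set set \<Rightarrow> bool" where
  "linear_3graph V E \<longleftrightarrow> finite V \<and> (\<forall>e\<in>E. e \<subseteq> V \<and> card e = 3) \<and>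
     (\<forall>e1\<in>E. \<forall>e2\<in>E. e1 \<noteq> e2 \<longrightarrow> card (e1 \<inter> e2) \<le> 1)"

definition contains_crown :: "'a set set \<Rightarrow> bool" where
  "contains_crown E \<longleftrightarrow> (\<exists>a b c d e f g h i.
      distinct [a, b, c, d, e, f, g, h, i] \<and>
      {a, b, c} \<in> E \<and> {a, d, e} \<in> E \<and> {b, f, g} \<in> E \<and> {c, h, i} \<in> E)"

text \<open>Linear Turan number ex(n, C13); vertex set taken to be {0..<n} (WLOG up to isomorphism).\<close>
definition ex_C13 :: "nat \<Rightarrow> nat" where
  "ex_C13 n = Max {card E | E :: nat set set.
      linear_3graph {..<n} E \<and> \<not> contains_crown E}"

end

theory Submission
  imports Defs
begin

text \<open>The proof is by discharging. A vertex of degree \<open>d \<le> 5\<close> gives \<open>1/d\<close> to each of its edges and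
  a vertex of degree \<open>\<ge> 6\<close> gives nothing, so the edges receive at most \<open>n - s\<close> in total, where \<open>s\<close>
  counts the vertices of degree \<open>\<ge> 6\<close>. Since no edge has vertex degrees \<open>\<ge> 2, \<ge> 4, \<ge> 6\<close> (they
  would carry a crown), every edge receives at least \<open>2/3 + 1/30\<close>, except deficient edges of
  degrees \<open>(4 or 5, 5, 5)\<close> and tight edges of degrees \<open>(3, 3, \<ge> 6)\<close>. Around a deficient edge
  \<open>abc\<close> crown-freeness forces the edges at \<open>b\<close> and \<open>c\<close> into two grids, and then every neighbour
  of \<open>b\<close> outside \<open>abc\<close> has degree at most 3. Hence an edge through \<open>b\<close> has a large surplus and
  can compensate \<open>abc\<close>, injectively. Tight edges are compensated by the edges through their two
  degree-3 vertices, most of which have a surplus when \<open>s\<close> is small. This yields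
  \<open>(2/3 + c) |E| \<le> n - s\<close> with \<open>c\<close> depending on \<open>s\<close>.\<close>

definition degree_share :: "nat \<Rightarrow> real" where
  "degree_share d = (if d \<le> 5 then 1 / real d else 0)"

lemma degree_share_ge_third: "1 \<le> d \<Longrightarrow> d \<le> 3 \<Longrightarrow> 1/3 \<le> degree_share d"
  by (auto simp: degree_share_def field_simps)

lemma degree_share_ge_fifth: "1 \<le> d \<Longrightarrow> d \<le> 5 \<Longrightarrow> 1/5 \<le> degree_share d"
  by (auto simp: degree_share_def field_simps)

lemma degree_share_sum_cases:
  fixes x y z :: nat
  assumes "1 \<le> x" "x \<le> y" "y \<le> z" and "\<not> (2 \<le> x \<and> 4 \<le> y \<and> 6 \<le> z)"
  shows "2/3 + 1/30 \<le> degree_share x + degree_share y + degree_share z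
    \<or> (3/5 \<le> degree_share x + degree_share y + degree_share z
        \<and> degree_share x + degree_share y + degree_share z < 2/3 \<and> 4 \<le> x \<and> y = 5 \<and> z = 5)
    \<or> (degree_share x + degree_share y + degree_share z = 2/3 \<and> x = 3 \<and> y = 3 \<and> 6 \<le> z)"
proof -
  have nonneg: "0 \<le> degree_share d" for d
    by (simp add: degree_share_def)
  consider "x = 1" | "2 \<le> x" "y \<le> 3" | "2 \<le> x" "4 \<le> y"
    using assms by linarith
  then show ?thesis
  proof cases
    case 1
    then show ?thesis
      using nonneg[of y] nonneg[of z] by (simp add: degree_share_def)
  next
    case 2
    then have "x = 2 \<and> y = 2 \<or> x = 2 \<and> y = 3 \<or> x = 3 \<and> y = 3"
      using assms by auto
    moreover have "z \<le> 5 \<Longrightarrow> 1/5 \<le> degree_share z"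
      using assms 2 by (intro degree_share_ge_fifth) auto
    ultimately show ?thesis
      using nonneg[of z] by (cases "z \<le> 5") (auto simp: degree_share_def)
  next
    case 3
    then have "x = 2 \<or> x = 3 \<or> x = 4 \<or> x = 5" "y = 4 \<or> y = 5" "z = 4 \<or> z = 5"
      using assms by auto
    then show ?thesis
      using assms by (elim disjE) (simp_all add: degree_share_def)
  qed
qed

locale crown_free_linear_3graph =
  fixes V :: "'a set" and E :: "'a set set"
  assumes linear: "linear_3graph V E" and crown_free: "\<not> contains_crown E"
begin

lemma finite_vertices: "finite V"
  using linear by (simp add: linear_3graph_def)

lemma edge_subset: "g \<in> E \<Longrightarrow> g \<subseteq> V"
  using linear by (simp add: linear_3graph_def)

lemma card_edge: "g \<in> E \<Longrightarrow> card g = 3"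
  using linear by (simp add: linear_3graph_def)

lemma finite_edge: "g \<in> E \<Longrightarrow> finite g"
  using card_edge card.infinite by fastforce

lemma finite_edges: "finite E"
proof -
  have "E \<subseteq> Pow V"
    using edge_subset by auto
  then show ?thesis
    using finite_vertices by (meson finite_Pow_iff rev_finite_subset)
qed

lemma edges_eqI:
  assumes "g \<in> E" "h \<in> E" "u \<in> g" "u \<in> h" "v \<in> g" "v \<in> h" "u \<noteq> v"
  shows "g = h"
proof (rule ccontr)
  assume "g \<noteq> h"
  then have "card (g \<inter> h) \<le> 1"
    using linear assms(1,2) by (auto simp: linear_3graph_def)
  moreover have "card {u, v} \<le> card (g \<inter> h)"
    using assms by (intro card_mono) (auto simp: finite_edge)
  ultimately show False
    using assms(7) by simp
qed

lemma edges_inter_eq_singleton: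
  assumes "g \<in> E" "h \<in> E" "g \<noteq> h" "v \<in> g" "v \<in> h"
  shows "g \<inter> h = {v}"
  using edges_eqI[OF assms(1,2)] assms(3-5) by blast

lemma other_vertex_notin:
  assumes "g \<in> E" "h \<in> E" "g \<noteq> h" "v \<in> g" "v \<in> h" "u \<in> g" "u \<noteq> v"
  shows "u \<notin> h"
  using edges_inter_eq_singleton[OF assms(1-5)] assms(6,7) by blast

lemma edge_eq_triple:
  assumes "g \<in> E" "u \<in> g" "v \<in> g" "w \<in> g" "distinct [u, v, w]"
  shows "g = {u, v, w}"
proof -
  have "{u, v, w} \<subseteq> g" "card {u, v, w} = 3"
    using assms by auto
  then show ?thesis
    using card_edge[OF assms(1)] finite_edge[OF assms(1)] by (metis card_subset_eq)
qed

lemma edge_distinct: "{a, b, c} \<in> E \<Longrightarrow> distinct [a, b, c]"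
  using card_edge[of "{a, b, c}"] by (auto simp: card_insert_if split: if_splits)

lemma obtain_edge_through:
  assumes "g \<in> E" "v \<in> g"
  obtains x y where "g = {v, x, y}" "distinct [v, x, y]"
proof -
  have "card (g - {v}) = 2"
    using assms card_edge finite_edge by simp
  then obtain x y where "g - {v} = {x, y}" "x \<noteq> y"
    by (meson card_2_iff)
  with assms(2) show ?thesis
    using that by auto
qed

lemma obtain_third_vertex:
  assumes "g \<in> E" "u \<in> g" "v \<in> g" "u \<noteq> v"
  obtains w where "g = {u, v, w}" "distinct [u, v, w]"
proof -
  obtain x y where "g = {u, x, y}" "distinct [u, x, y]"
    using obtain_edge_through[OF assms(1,2)] .
  with assms(3,4) that show ?thesis
    by (auto simp: insert_commute)
qed

lemma no_crown:
  assumes "{a, b, c} \<in> E" "{a, d, e} \<in> E" "{b, f, g} \<in> E" "{c, h, i} \<in> E"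
    and "distinct [a, b, c, d, e, f, g, h, i]"
  shows False
  using crown_free assms unfolding contains_crown_def by blast

lemma no_disjoint_pendant_edges:
  assumes abc: "{a, b, c} \<in> E"
    and A: "A \<in> E" "a \<in> A" "A \<noteq> {a, b, c}"
    and B: "B \<in> E" "b \<in> B" "B \<noteq> {a, b, c}"
    and C: "C \<in> E" "c \<in> C" "C \<noteq> {a, b, c}"
    and disjoint: "A \<inter> B = {}" "A \<inter> C = {}" "B \<inter> C = {}"
  shows False
proof -
  obtain x y where x: "A = {a, x, y}" "distinct [a, x, y]"
    using obtain_edge_through[OF A(1,2)] .
  obtain u v where u: "B = {b, u, v}" "distinct [b, u, v]"
    using obtain_edge_through[OF B(1,2)] .
  obtain h i where h: "C = {c, h, i}" "distinct [c, h, i]"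
    using obtain_edge_through[OF C(1,2)] .
  have "card (A \<union> B \<union> C) = 9"
    using disjoint A(1) B(1) C(1) card_edge finite_edge
    by (simp add: card_Un_disjoint Int_Un_distrib2)
  moreover have "set [a, b, c, x, y, u, v, h, i] = A \<union> B \<union> C"
    using x(1) u(1) h(1) by auto
  ultimately have "distinct [a, b, c, x, y, u, v, h, i]"
    by (intro card_distinct) simp
  then show False
    using no_crown[of a b c x y u v h i] abc A(1) B(1) C(1) x(1) u(1) h(1) by blast
qed

lemma no_disjoint_pendant_triples:
  assumes abc: "{a, b, c} \<in> E" and "{a, p1, p2} \<in> E" "{b, q1, q2} \<in> E" "{c, r1, r2} \<in> E"
    and "{a, p1, p2} \<inter> {b, q1, q2} = {}" "{a, p1, p2} \<inter> {c, r1, r2} = {}"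
      "{b, q1, q2} \<inter> {c, r1, r2} = {}"
  shows False
  using no_disjoint_pendant_edges[OF abc assms(2) _ _ assms(3) _ _ assms(4)] assms(5-7) by blast

definition degree :: "'a \<Rightarrow> nat" where
  "degree v = card {g \<in> E. v \<in> g}"

lemma finite_edges_with: "finite {g \<in> E. P g}"
  using finite_edges by simp

lemma degree_pos:
  assumes "g \<in> E" "v \<in> g"
  shows "1 \<le> degree v"
proof -
  have "{g \<in> E. v \<in> g} \<noteq> {}"
    using assms by auto
  then show ?thesis
    unfolding degree_def using finite_edges_with[of "\<lambda>g. v \<in> g"]
    by (simp add: Suc_le_eq card_gt_0_iff)
qed

lemma card_edges_through_two_le_1:
  assumes "u \<noteq> v"
  shows "card {g \<in> E. u \<in> g \<and> v \<in> g} \<le> 1"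
proof -
  have "\<forall>g\<in>{g \<in> E. u \<in> g \<and> v \<in> g}. \<forall>h\<in>{g \<in> E. u \<in> g \<and> v \<in> g}. g = h"
    using edges_eqI assms by blast
  then show ?thesis
    using card_le_Suc0_iff_eq[OF finite_edges_with] by auto
qed

lemma card_edges_through_meeting_le:
  assumes "finite X" "v \<notin> X"
  shows "card {g \<in> E. v \<in> g \<and> g \<inter> X \<noteq> {}} \<le> card X"
proof -
  have "{g \<in> E. v \<in> g \<and> g \<inter> X \<noteq> {}} = (\<Union>x\<in>X. {g \<in> E. v \<in> g \<and> x \<in> g})"
    by auto
  then have "card {g \<in> E. v \<in> g \<and> g \<inter> X \<noteq> {}} \<le> (\<Sum>x\<in>X. card {g \<in> E. v \<in> g \<and> x \<in> g})"
    using card_UN_le[OF assms(1)] by simp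
  also have "\<dots> \<le> (\<Sum>x\<in>X. 1)"
  proof (rule sum_mono)
    fix x
    assume "x \<in> X"
    with assms(2) have "v \<noteq> x"
      by auto
    then show "card {g \<in> E. v \<in> g \<and> x \<in> g} \<le> 1"
      by (rule card_edges_through_two_le_1)
  qed
  finally show ?thesis
    by simp
qed

lemma degree_le_card_edges_avoiding:
  assumes "finite X" "v \<notin> X" "finite F"
  shows "degree v \<le> card {g \<in> E. v \<in> g \<and> g \<notin> F \<and> g \<inter> X = {}} + card F + card X"
proof -
  let ?good = "{g \<in> E. v \<in> g \<and> g \<notin> F \<and> g \<inter> X = {}}"
  let ?meeting = "{g \<in> E. v \<in> g \<and> g \<inter> X \<noteq> {}}"
  have "{g \<in> E. v \<in> g} \<subseteq> ?good \<union> F \<union> ?meeting"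
    by blast
  then have "degree v \<le> card (?good \<union> F \<union> ?meeting)"
    unfolding degree_def using assms(3) by (intro card_mono) (auto simp: finite_edges_with)
  also have "\<dots> \<le> card (?good \<union> F) + card ?meeting"
    by (rule card_Un_le)
  also have "\<dots> \<le> card ?good + card F + card ?meeting"
    using card_Un_le[of ?good F] by linarith
  finally show ?thesis
    using card_edges_through_meeting_le[OF assms(1,2)] by linarith
qed

lemma obtain_edge_avoiding:
  assumes "finite X" "v \<notin> X" "finite F" "card F + card X < degree v"
  obtains g where "g \<in> E" "v \<in> g" "g \<notin> F" "g \<inter> X = {}"
proof -
  have "card {g \<in> E. v \<in> g \<and> g \<notin> F \<and> g \<inter> X = {}} \<noteq> 0"
    using degree_le_card_edges_avoiding[OF assms(1-3)] assms(4) by linarith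
  then have "{g \<in> E. v \<in> g \<and> g \<notin> F \<and> g \<inter> X = {}} \<noteq> {}"
    by (metis card.empty)
  with that show ?thesis
    by blast
qed

lemma obtain_other_edge_through:
  assumes "finite F" "card F < degree v"
  obtains g where "g \<in> E" "v \<in> g" "g \<notin> F"
proof -
  have "v \<notin> {}" "card F + card {} < degree v"
    using assms(2) by simp_all
  then show ?thesis
    using obtain_edge_avoiding[OF finite.emptyI _ assms(1)] that by blast
qed

lemma not_crown_degrees:
  assumes abc: "{a, b, c} \<in> E"
  shows "\<not> (2 \<le> degree a \<and> 4 \<le> degree b \<and> 6 \<le> degree c)"
proof
  assume deg: "2 \<le> degree a \<and> 4 \<le> degree b \<and> 6 \<le> degree c"
  have distinct: "a \<noteq> b" "a \<noteq> c" "b \<noteq> c"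
    using edge_distinct[OF abc] by auto
  have meet_abc: "u \<notin> g" if "g \<in> E" "v \<in> g" "g \<noteq> {a, b, c}" "v \<in> {a, b, c}"
    "u \<in> {a, b, c}" "u \<noteq> v" for g u v
    using edges_inter_eq_singleton[OF that(1) abc that(3)] that(2,4-6) by blast
  have card_rest: "card (g - {v}) = 2" if "g \<in> E" "v \<in> g" for g v
    using that card_edge finite_edge by simp
  obtain A where A: "A \<in> E" "a \<in> A" "A \<noteq> {a, b, c}"
    using obtain_edge_avoiding[of "{}" a "{{a, b, c}}"] deg by auto
  have A_abc: "b \<notin> A" "c \<notin> A"
    using meet_abc[OF A] distinct by auto
  obtain B where B: "B \<in> E" "b \<in> B" "B \<noteq> {a, b, c}" "B \<inter> (A - {a}) = {}"
    using obtain_edge_avoiding[of "A - {a}" b "{{a, b, c}}"] deg card_rest[OF A(1,2)]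
      finite_edge[OF A(1)] A_abc by auto
  have B_abc: "a \<notin> B" "c \<notin> B"
    using meet_abc[OF B(1-3)] distinct by auto
  define X where "X = (A - {a}) \<union> (B - {b})"
  have "card X \<le> 4"
    unfolding X_def using card_Un_le[of "A - {a}" "B - {b}"] card_rest A(1,2) B(1,2) by simp
  then have "card {{a, b, c}} + card X < degree c"
    using deg by simp
  moreover have "c \<notin> X"
    unfolding X_def using A_abc B_abc by blast
  moreover have "finite X"
    unfolding X_def using finite_edge A(1) B(1) by simp
  ultimately obtain C where C: "C \<in> E" "c \<in> C" "C \<noteq> {a, b, c}" "C \<inter> X = {}"
    using obtain_edge_avoiding[of X c "{{a, b, c}}"] by blast
  have C_abc: "a \<notin> C" "b \<notin> C"
    using meet_abc[OF C(1-3)] distinct by auto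
  have "A \<inter> B = {}"
    using B(4) B_abc by blast
  moreover have "A \<inter> C = {}" "B \<inter> C = {}"
    using C(4) C_abc unfolding X_def by blast+
  ultimately show False
    using no_disjoint_pendant_edges[OF abc A B(1-3) C(1-3)] by blast
qed

lemma obtain_edge_sorted_by_degree:
  assumes "g \<in> E"
  obtains a b c where "g = {a, b, c}" "degree a \<le> degree b" "degree b \<le> degree c"
proof -
  obtain u where "u \<in> g"
    using card_edge[OF assms] by fastforce
  then obtain v w where g: "g = {u, v, w}"
    using obtain_edge_through[OF assms] by blast
  have perms: "g = {u, v, w}" "g = {u, w, v}" "g = {v, u, w}" "g = {v, w, u}" "g = {w, u, v}" "g = {w, v, u}"
    using g by auto
  consider "degree u \<le> degree v" "degree v \<le> degree w"
    | "degree u \<le> degree w" "degree w \<le> degree v"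
    | "degree v \<le> degree u" "degree u \<le> degree w"
    | "degree v \<le> degree w" "degree w \<le> degree u"
    | "degree w \<le> degree u" "degree u \<le> degree v"
    | "degree w \<le> degree v" "degree v \<le> degree u"
    by linarith
  then show ?thesis
  proof cases
    case 1
    then show ?thesis using that[OF perms(1)] by simp
  next
    case 2
    then show ?thesis using that[OF perms(2)] by simp
  next
    case 3
    then show ?thesis using that[OF perms(3)] by simp
  next
    case 4
    then show ?thesis using that[OF perms(4)] by simp
  next
    case 5
    then show ?thesis using that[OF perms(5)] by simp
  next
    case 6
    then show ?thesis using that[OF perms(6)] by simp
  qed
qed

definition charge :: "'a set \<Rightarrow> real" where
  "charge g = (\<Sum>v\<in>g. degree_share (degree v))"

definition excess :: "'a set \<Rightarrow> real" where
  "excess g = charge g - 2/3"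

lemma charge_triple:
  "distinct [a, b, c] \<Longrightarrow>
    charge {a, b, c} = degree_share (degree a) + degree_share (degree b) + degree_share (degree c)"
  unfolding charge_def by simp

lemma excess_cases:
  assumes "g \<in> E"
  shows "1/30 \<le> excess g
    \<or> (-1/15 \<le> excess g \<and> excess g < 0
        \<and> (\<exists>a b c. g = {a, b, c} \<and> 4 \<le> degree a \<and> degree b = 5 \<and> degree c = 5))
    \<or> (excess g = 0 \<and> (\<exists>a b c. g = {a, b, c} \<and> degree a = 3 \<and> degree b = 3 \<and> 6 \<le> degree c))"
proof -
  obtain a b c where g: "g = {a, b, c}" "degree a \<le> degree b" "degree b \<le> degree c"
    using obtain_edge_sorted_by_degree[OF assms] .
  have abc: "{a, b, c} \<in> E"
    using assms g(1) by simp
  have "excess g = degree_share (degree a) + degree_share (degree b) + degree_share (degree c) - 2/3"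
    unfolding excess_def g(1) using charge_triple edge_distinct[OF abc] by simp
  moreover have "1 \<le> degree a"
    using degree_pos[OF abc] by simp
  ultimately show ?thesis
    using degree_share_sum_cases[of "degree a" "degree b" "degree c"] g not_crown_degrees[OF abc]
    by auto
qed

section \<open>The neighbourhood of a deficient edge\<close>

lemma pendant_edges_meet:
  assumes abc: "{a, b, c} \<in> E" and A: "{a, x, y} \<in> E" "{a, x, y} \<noteq> {a, b, c}"
    and B: "B \<in> E" "b \<in> B" "B \<noteq> {a, b, c}" "B \<inter> {x, y} = {}"
    and C: "C \<in> E" "c \<in> C" "C \<noteq> {a, b, c}" "C \<inter> {x, y} = {}"
  shows "B \<inter> C \<noteq> {}"
proof
  assume BC: "B \<inter> C = {}"
  have distinct: "a \<noteq> b" "a \<noteq> c"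
    using edge_distinct[OF abc] by auto
  have "a \<notin> B" "a \<notin> C"
    using other_vertex_notin[OF abc B(1) B(3)[symmetric], of b a]
      other_vertex_notin[OF abc C(1) C(3)[symmetric], of c a] B(2) C(2) distinct by auto
  then have "{a, x, y} \<inter> B = {}" "{a, x, y} \<inter> C = {}"
    using B(4) C(4) by auto
  then show False
    using no_disjoint_pendant_edges[OF abc A(1) _ A(2) B(1-3) C(1-3)] BC by simp
qed

lemma card_pendant_edges_avoiding_eq_2:
  assumes abc: "{a, b, c} \<in> E" and deg: "degree b = 5" "degree c = 5"
    and A: "{a, x, y} \<in> E" "{a, x, y} \<noteq> {a, b, c}"
  shows "card {g \<in> E. b \<in> g \<and> g \<noteq> {a, b, c} \<and> g \<inter> {x, y} = {}} = 2"
proof -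
  let ?avoiding = "\<lambda>w. {g \<in> E. w \<in> g \<and> g \<noteq> {a, b, c} \<and> g \<inter> {x, y} = {}}"
  have distinct: "a \<noteq> b" "a \<noteq> c" "b \<noteq> c"
    using edge_distinct[OF abc] by auto
  have "b \<notin> {a, x, y}" "c \<notin> {a, x, y}"
    using other_vertex_notin[OF abc A(1) A(2)[symmetric], of a] distinct by auto
  then have xy: "b \<notin> {x, y}" "c \<notin> {x, y}"
    by simp_all
  have lower: "2 \<le> card (?avoiding w)" if "w \<notin> {x, y}" "degree w = 5" for w
  proof -
    have "degree w \<le> card (?avoiding w) + 1 + card {x, y}"
      using degree_le_card_edges_avoiding[of "{x, y}" w "{{a, b, c}}"] that(1) by simp
    moreover have "card {x, y} \<le> 2"
      by (simp add: card_insert_le_m1)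
    ultimately show ?thesis
      using that(2) by linarith
  qed
  have "0 < card (?avoiding c)"
    using lower[OF xy(2) deg(2)] by linarith
  then have "?avoiding c \<noteq> {}"
    by (rule card_gt_0_iff[THEN iffD1, THEN conjunct1])
  then obtain C where C: "C \<in> E" "c \<in> C" "C \<noteq> {a, b, c}" "C \<inter> {x, y} = {}"
    by blast
  obtain u v where uv: "C = {c, u, v}" "distinct [c, u, v]"
    using obtain_edge_through[OF C(1,2)] .
  have "b \<notin> C"
    using other_vertex_notin[OF abc C(1) C(3)[symmetric], of c b] C(2) distinct by simp
  then have "b \<notin> {u, v}"
    using uv(1) by simp
  have "?avoiding b \<subseteq> {g \<in> E. b \<in> g \<and> g \<inter> {u, v} \<noteq> {}}"
  proof
    fix B
    assume "B \<in> ?avoiding b"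
    then have B: "B \<in> E" "b \<in> B" "B \<noteq> {a, b, c}" "B \<inter> {x, y} = {}"
      by simp_all
    have "c \<notin> B"
      using other_vertex_notin[OF abc B(1) B(3)[symmetric], of b c] B(2) distinct by simp
    moreover have "B \<inter> C \<noteq> {}"
      using pendant_edges_meet[OF abc A B C] .
    ultimately have "B \<inter> {u, v} \<noteq> {}"
      using uv(1) by blast
    then show "B \<in> {g \<in> E. b \<in> g \<and> g \<inter> {u, v} \<noteq> {}}"
      using B(1,2) by blast
  qed
  then have "card (?avoiding b) \<le> card {g \<in> E. b \<in> g \<and> g \<inter> {u, v} \<noteq> {}}"
    by (intro card_mono finite_edges_with)
  also have "\<dots> \<le> card {u, v}"
    using card_edges_through_meeting_le[of "{u, v}" b] \<open>b \<notin> {u, v}\<close> by simp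
  also have "\<dots> \<le> 2"
    by (simp add: card_insert_le_m1)
  finally show ?thesis
    using lower[OF xy(1) deg(1)] by linarith
qed

lemma obtain_edge_through_pendant_vertex:
  assumes abc: "{a, b, c} \<in> E" and deg: "degree b = 5" "degree c = 5"
    and A: "{a, x, y} \<in> E" "{a, x, y} \<noteq> {a, b, c}"
  obtains x' where "{b, x, x'} \<in> E" "distinct [b, x, x']"
proof -
  let ?avoiding = "{g \<in> E. b \<in> g \<and> g \<noteq> {a, b, c} \<and> g \<inter> {x, y} = {}}"
  have "card (insert {a, b, c} ?avoiding) \<le> 3"
    using card_pendant_edges_avoiding_eq_2[OF abc deg A]
    by (intro card_insert_le_m1) simp_all
  then have card_F: "card (insert {a, b, c} ?avoiding) + card {y} < degree b"
    using deg by simp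
  have "b \<noteq> a"
    using edge_distinct[OF abc] by auto
  then have "b \<notin> {a, x, y}"
    using other_vertex_notin[OF abc A(1) A(2)[symmetric], of a b] by simp
  then have "b \<notin> {y}" "b \<noteq> x"
    by simp_all
  have "finite (insert {a, b, c} ?avoiding)"
    using finite_edges_with by simp
  then obtain g where g: "g \<in> E" "b \<in> g" "g \<notin> insert {a, b, c} ?avoiding" "g \<inter> {y} = {}"
    using obtain_edge_avoiding[OF finite.insertI[OF finite.emptyI] \<open>b \<notin> {y}\<close> _ card_F] by blast
  have "x \<in> g \<or> y \<in> g"
    using g(1-3) by auto
  then have "x \<in> g"
    using g(4) by blast
  then obtain x' where "g = {b, x, x'}" "distinct [b, x, x']"
    using obtain_third_vertex[OF g(1,2) _ \<open>b \<noteq> x\<close>] by blast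
  then show ?thesis
    using that[of x'] g(1) by simp
qed

lemma obtain_grid:
  assumes B: "B1 \<in> E" "B2 \<in> E" "B1 \<noteq> B2" "b \<in> B1" "b \<in> B2" "c \<notin> B1" "c \<notin> B2"
    and C: "C1 \<in> E" "C2 \<in> E" "C1 \<noteq> C2" "c \<in> C1" "c \<in> C2" "b \<notin> C1" "b \<notin> C2"
    and meet: "B1 \<inter> C1 \<noteq> {}" "B1 \<inter> C2 \<noteq> {}" "B2 \<inter> C1 \<noteq> {}" "B2 \<inter> C2 \<noteq> {}"
  obtains u1 v1 u2 v2 where "B1 = {b, u1, v1}" "B2 = {b, u2, v2}" "C1 = {c, u1, u2}" "C2 = {c, v1, v2}"
    "distinct [b, c, u1, v1, u2, v2]"
proof -
  have row: "\<exists>u v. Bi = {b, u, v} \<and> distinct [b, u, v] \<and> u \<in> C1 \<and> v \<in> C2"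
    if Bi: "Bi \<in> E" "b \<in> Bi" "c \<notin> Bi" "Bi \<inter> C1 \<noteq> {}" "Bi \<inter> C2 \<noteq> {}" for Bi
  proof -
    obtain u where u: "u \<in> Bi" "u \<in> C1"
      using Bi(4) by blast
    have "b \<noteq> u"
      using u(2) C(6) by blast
    obtain v where v: "Bi = {b, u, v}" "distinct [b, u, v]"
      using obtain_third_vertex[OF Bi(1,2) u(1) \<open>b \<noteq> u\<close>] by blast
    have "u \<noteq> c"
      using u(1) Bi(3) by blast
    then have "u \<notin> C2"
      using other_vertex_notin[OF C(1,2,3,4,5) u(2)] by blast
    have "Bi \<inter> C2 \<subseteq> {v}"
      using C(7) \<open>u \<notin> C2\<close> v(1) by blast
    then have "v \<in> C2"
      using Bi(5) by blast
    with u(2) v show ?thesis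
      by (intro exI[of _ u] exI[of _ v]) simp
  qed
  obtain u1 v1 where 1: "B1 = {b, u1, v1}" "distinct [b, u1, v1]" "u1 \<in> C1" "v1 \<in> C2"
    using row[OF B(1,4,6) meet(1,2)] by blast
  obtain u2 v2 where 2: "B2 = {b, u2, v2}" "distinct [b, u2, v2]" "u2 \<in> C1" "v2 \<in> C2"
    using row[OF B(2,5,7) meet(3,4)] by blast
  have "u2 \<notin> B1" "v2 \<notin> B1"
    using other_vertex_notin[OF B(2,1) B(3)[symmetric] B(5,4)] 2(1,2) by auto
  then have "u2 \<notin> {b, u1, v1}" "v2 \<notin> {b, u1, v1}"
    using 1(1) by simp_all
  moreover have "c \<notin> {b, u1, v1}" "c \<notin> {b, u2, v2}"
    using B(6,7) 1(1) 2(1) by simp_all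
  ultimately have distinct: "distinct [b, c, u1, v1, u2, v2]"
    using 1(2) 2(2) by auto
  have C12: "C1 = {c, u1, u2}" "C2 = {c, v1, v2}"
    using edge_eq_triple[OF C(1,4) 1(3) 2(3)] edge_eq_triple[OF C(2,5) 1(4) 2(4)] distinct by simp_all
  show ?thesis
    using 1(1) 2(1) C12 distinct by (rule that)
qed

lemma obtain_grid_of_degree_5_pair:
  assumes abc: "{a, b, c} \<in> E" and deg: "degree b = 5" "degree c = 5"
    and A: "{a, x, y} \<in> E" "{a, x, y} \<noteq> {a, b, c}"
  obtains u1 v1 u2 v2 where
    "{b, u1, v1} \<in> E" "{b, u2, v2} \<in> E" "{c, u1, u2} \<in> E" "{c, v1, v2} \<in> E"
    "distinct [a, b, c, u1, v1, u2, v2, x, y]"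
    "\<forall>g\<in>E. b \<in> g \<and> g \<noteq> {a, b, c} \<and> g \<inter> {x, y} = {} \<longrightarrow> g \<in> {{b, u1, v1}, {b, u2, v2}}"
    "\<forall>g\<in>E. c \<in> g \<and> g \<noteq> {a, b, c} \<and> g \<inter> {x, y} = {} \<longrightarrow> g \<in> {{c, u1, u2}, {c, v1, v2}}"
proof -
  have distinct: "a \<noteq> b" "a \<noteq> c" "b \<noteq> c" "a \<noteq> x" "a \<noteq> y" "x \<noteq> y"
    using edge_distinct[OF abc] edge_distinct[OF A(1)] by auto
  have "b \<notin> {a, x, y}" "c \<notin> {a, x, y}"
    using other_vertex_notin[OF abc A(1) A(2)[symmetric], of a] distinct by auto
  let ?Bs = "{g \<in> E. b \<in> g \<and> g \<noteq> {a, b, c} \<and> g \<inter> {x, y} = {}}"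
  let ?Cs = "{g \<in> E. c \<in> g \<and> g \<noteq> {a, b, c} \<and> g \<inter> {x, y} = {}}"
  have "card ?Bs = 2"
    using card_pendant_edges_avoiding_eq_2[OF abc deg A] .
  moreover have "card ?Cs = 2"
    using card_pendant_edges_avoiding_eq_2[of a c b x y] abc deg A by (simp add: insert_commute)
  ultimately obtain B1 B2 C1 C2 where Bs: "?Bs = {B1, B2}" "B1 \<noteq> B2" and Cs: "?Cs = {C1, C2}" "C1 \<noteq> C2"
    by (meson card_2_iff)
  have B: "B \<in> E" "b \<in> B" "B \<noteq> {a, b, c}" "B \<inter> {x, y} = {}" "a \<notin> B" "c \<notin> B"
    if "B \<in> {B1, B2}" for B
  proof -
    have "B \<in> ?Bs"
      unfolding Bs(1) using that .
    then show B: "B \<in> E" "b \<in> B" "B \<noteq> {a, b, c}" "B \<inter> {x, y} = {}"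
      by simp_all
    show "a \<notin> B" "c \<notin> B"
      using other_vertex_notin[OF abc B(1) B(3)[symmetric], of b] B(2) distinct by auto
  qed
  have C: "C \<in> E" "c \<in> C" "C \<noteq> {a, b, c}" "C \<inter> {x, y} = {}" "a \<notin> C" "b \<notin> C"
    if "C \<in> {C1, C2}" for C
  proof -
    have "C \<in> ?Cs"
      unfolding Cs(1) using that .
    then show C: "C \<in> E" "c \<in> C" "C \<noteq> {a, b, c}" "C \<inter> {x, y} = {}"
      by simp_all
    show "a \<notin> C" "b \<notin> C"
      using other_vertex_notin[OF abc C(1) C(3)[symmetric], of c] C(2) distinct by auto
  qed
  have meet: "B \<inter> C \<noteq> {}" if "B \<in> {B1, B2}" "C \<in> {C1, C2}" for B C
    using pendant_edges_meet[OF abc A B(1-4)[OF that(1)] C(1-4)[OF that(2)]] .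
  note in1 = insertI1 and in2 = insertI2[OF singletonI]
  note B1 = B[OF in1] and B2 = B[OF in2] and C1 = C[OF in1] and C2 = C[OF in2]
  obtain u1 v1 u2 v2 where grid: "B1 = {b, u1, v1}" "B2 = {b, u2, v2}" "C1 = {c, u1, u2}"
    "C2 = {c, v1, v2}" "distinct [b, c, u1, v1, u2, v2]"
    using obtain_grid[OF B1(1) B2(1) Bs(2) B1(2) B2(2) B1(6) B2(6) C1(1) C2(1) Cs(2) C1(2) C2(2)
        C1(6) C2(6) meet[OF in1 in1] meet[OF in1 in2] meet[OF in2 in1] meet[OF in2 in2]] .
  have "a \<notin> {b, u1, v1}" "a \<notin> {b, u2, v2}" "x \<notin> {b, u1, v1}" "x \<notin> {b, u2, v2}"
    "y \<notin> {b, u1, v1}" "y \<notin> {b, u2, v2}"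
    using B1(4,5) B2(4,5) grid(1,2) by blast+
  then have "distinct [a, b, c, u1, v1, u2, v2, x, y]"
    using grid(5) distinct \<open>c \<notin> {a, x, y}\<close> by auto
  moreover have "\<forall>g\<in>E. b \<in> g \<and> g \<noteq> {a, b, c} \<and> g \<inter> {x, y} = {} \<longrightarrow> g \<in> {{b, u1, v1}, {b, u2, v2}}"
  proof (intro ballI impI)
    fix g
    assume "g \<in> E" "b \<in> g \<and> g \<noteq> {a, b, c} \<and> g \<inter> {x, y} = {}"
    then have "g \<in> ?Bs"
      by simp
    then show "g \<in> {{b, u1, v1}, {b, u2, v2}}"
      unfolding Bs(1) grid(1,2) .
  qed
  moreover have "\<forall>g\<in>E. c \<in> g \<and> g \<noteq> {a, b, c} \<and> g \<inter> {x, y} = {} \<longrightarrow> g \<in> {{c, u1, u2}, {c, v1, v2}}"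
  proof (intro ballI impI)
    fix g
    assume "g \<in> E" "c \<in> g \<and> g \<noteq> {a, b, c} \<and> g \<inter> {x, y} = {}"
    then have "g \<in> ?Cs"
      by simp
    then show "g \<in> {{c, u1, u2}, {c, v1, v2}}"
      unfolding Cs(1) grid(3,4) .
  qed
  ultimately show ?thesis
    using that[of u1 v1 u2 v2] B1(1) B2(1) C1(1) C2(1) unfolding grid(1-4) by blast
qed

lemma third_vertex_notin_edge:
  assumes G: "{p, z, w} \<in> E" "distinct [p, z, w]"
    and H: "H \<in> E" "v \<in> {p, z}" "v \<in> H" "\<not> {p, z} \<subseteq> H"
  shows "w \<notin> H"
proof -
  have "{p, z, w} \<noteq> H"
    using H(4) by blast
  moreover have "w \<noteq> v"
    using G(2) H(2) by auto
  ultimately show ?thesis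
    using other_vertex_notin[OF G(1) H(1) _ _ H(3)] H(2) by blast
qed

lemma link_vertex_fresh:
  assumes G: "{p, z, w} \<in> E" "distinct [p, z, w]"
    and T: "T \<in> E" "p \<in> T" "z \<notin> T" and A: "A \<in> E" "z \<in> A" "p \<notin> A"
    and P1: "P1 \<in> E" "p \<in> P1" "z \<notin> P1" and P2: "P2 \<in> E" "p \<in> P2" "z \<notin> P2"
  shows "w \<notin> T \<union> A \<union> P1 \<union> P2"
proof -
  have "p \<in> {p, z}" "z \<in> {p, z}"
    by simp_all
  then show ?thesis
    using third_vertex_notin_edge[OF G T(1), of p] third_vertex_notin_edge[OF G A(1), of z]
      third_vertex_notin_edge[OF G P1(1), of p] third_vertex_notin_edge[OF G P2(1), of p]
      T A P1 P2 by blast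
qed
lemma edges_through_eq:
  assumes T: "T \<in> E" "b \<in> T" and P: "P \<in> E" "b \<in> P" and Q: "Q \<in> E" "b \<in> Q"
    and X: "{b, x, x'} \<in> E" "b \<noteq> x" and Y: "{b, y, y'} \<in> E" "b \<noteq> y"
    and others: "\<forall>g\<in>E. b \<in> g \<and> g \<noteq> T \<and> g \<inter> {x, y} = {} \<longrightarrow> g \<in> {P, Q}"
  shows "{g \<in> E. b \<in> g} = {T, P, Q, {b, x, x'}, {b, y, y'}}"
proof (intro equalityI subsetI)
  fix g
  assume "g \<in> {g \<in> E. b \<in> g}"
  then have g: "g \<in> E" "b \<in> g"
    by simp_all
  consider "g = T" | "x \<in> g" | "y \<in> g" | "g \<noteq> T" "g \<inter> {x, y} = {}"
    by blast
  then show "g \<in> {T, P, Q, {b, x, x'}, {b, y, y'}}"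
  proof cases
    case 2
    then have "g = {b, x, x'}"
      using edges_eqI[OF g(1) X(1) g(2) _ 2 _ X(2)] by simp
    then show ?thesis
      by simp
  next
    case 3
    then have "g = {b, y, y'}"
      using edges_eqI[OF g(1) Y(1) g(2) _ 3 _ Y(2)] by simp
    then show ?thesis
      by simp
  next
    case 4
    then show ?thesis
      using others g by blast
  qed simp
next
  fix g
  assume "g \<in> {T, P, Q, {b, x, x'}, {b, y, y'}}"
  then show "g \<in> {g \<in> E. b \<in> g}"
    using T P Q X(1) Y(1) by auto
qed

lemma obtain_link_of_degree_5_pair:
  assumes abc: "{a, b, c} \<in> E" and deg: "degree b = 5" "degree c = 5"
    and A: "{a, x, y} \<in> E" "{a, x, y} \<noteq> {a, b, c}"
  obtains u1 v1 u2 v2 x1 y1 x2 y2 where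
    "{b, u1, v1} \<in> E" "{b, u2, v2} \<in> E" "{b, x, x1} \<in> E" "{b, y, y1} \<in> E"
    "{c, u1, u2} \<in> E" "{c, v1, v2} \<in> E" "{c, x, x2} \<in> E" "{c, y, y2} \<in> E"
    "distinct [a, b, c, u1, v1, u2, v2, x, y]"
    "x1 \<notin> {a, b, c, u1, v1, u2, v2, x, y}" "y1 \<notin> {a, b, c, u1, v1, u2, v2, x, y}"
    "x2 \<notin> {a, b, c, u1, v1, u2, v2, x, y}" "y2 \<notin> {a, b, c, u1, v1, u2, v2, x, y}"
    "x1 \<noteq> y1" "x2 \<noteq> y2" "x1 \<noteq> x2" "y1 \<noteq> y2"
    "{g \<in> E. b \<in> g} = {{a, b, c}, {b, u1, v1}, {b, u2, v2}, {b, x, x1}, {b, y, y1}}"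
    "{g \<in> E. c \<in> g} = {{a, b, c}, {c, u1, u2}, {c, v1, v2}, {c, x, x2}, {c, y, y2}}"
proof -
  obtain u1 v1 u2 v2 where grid: "{b, u1, v1} \<in> E" "{b, u2, v2} \<in> E" "{c, u1, u2} \<in> E"
      "{c, v1, v2} \<in> E" and distinct: "distinct [a, b, c, u1, v1, u2, v2, x, y]"
    and B_others: "\<forall>g\<in>E. b \<in> g \<and> g \<noteq> {a, b, c} \<and> g \<inter> {x, y} = {} \<longrightarrow> g \<in> {{b, u1, v1}, {b, u2, v2}}"
    and C_others: "\<forall>g\<in>E. c \<in> g \<and> g \<noteq> {a, b, c} \<and> g \<inter> {x, y} = {} \<longrightarrow> g \<in> {{c, u1, u2}, {c, v1, v2}}"
    using obtain_grid_of_degree_5_pair[OF abc deg A] .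
  have swap: "{a, c, b} = {a, b, c}" "{a, y, x} = {a, x, y}"
    by (simp_all add: insert_commute)
  obtain x1 where x1: "{b, x, x1} \<in> E" "distinct [b, x, x1]"
    using obtain_edge_through_pendant_vertex[OF abc deg A] .
  obtain y1 where y1: "{b, y, y1} \<in> E" "distinct [b, y, y1]"
    using obtain_edge_through_pendant_vertex[of a b c y x] abc deg A unfolding swap by blast
  obtain x2 where x2: "{c, x, x2} \<in> E" "distinct [c, x, x2]"
    using obtain_edge_through_pendant_vertex[of a c b x y] abc deg A unfolding swap by blast
  obtain y2 where y2: "{c, y, y2} \<in> E" "distinct [c, y, y2]"
    using obtain_edge_through_pendant_vertex[of a c b y x] abc deg A unfolding swap by blast
  let ?W = "{a, b, c, u1, v1, u2, v2, x, y}"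
  have W_b: "?W = {a, b, c} \<union> {a, x, y} \<union> {b, u1, v1} \<union> {b, u2, v2}"
    and W_c: "?W = {a, b, c} \<union> {a, x, y} \<union> {c, u1, u2} \<union> {c, v1, v2}"
    by auto
  have out: "x \<notin> {a, b, c}" "y \<notin> {a, b, c}" "b \<notin> {a, x, y}" "c \<notin> {a, x, y}"
    "x \<notin> {b, u1, v1}" "x \<notin> {b, u2, v2}" "y \<notin> {b, u1, v1}" "y \<notin> {b, u2, v2}"
    "x \<notin> {c, u1, u2}" "x \<notin> {c, v1, v2}" "y \<notin> {c, u1, u2}" "y \<notin> {c, v1, v2}"
    using distinct by auto
  have x1_fresh: "x1 \<notin> ?W"
    unfolding W_b using link_vertex_fresh[OF x1 abc _ out(1) A(1) _ out(3) grid(1) _ out(5) grid(2) _ out(6)]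
    by simp
  have y1_fresh: "y1 \<notin> ?W"
    unfolding W_b using link_vertex_fresh[OF y1 abc _ out(2) A(1) _ out(3) grid(1) _ out(7) grid(2) _ out(8)]
    by simp
  have x2_fresh: "x2 \<notin> ?W"
    unfolding W_c using link_vertex_fresh[OF x2 abc _ out(1) A(1) _ out(4) grid(3) _ out(9) grid(4) _ out(10)]
    by simp
  have y2_fresh: "y2 \<notin> ?W"
    unfolding W_c using link_vertex_fresh[OF y2 abc _ out(2) A(1) _ out(4) grid(3) _ out(11) grid(4) _ out(12)]
    by simp
  have "\<not> {b, x} \<subseteq> {b, y, y1}" "\<not> {c, x} \<subseteq> {c, y, y2}"
    "\<not> {b, x} \<subseteq> {c, x, x2}" "\<not> {b, y} \<subseteq> {c, y, y2}"
  proof -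
    have "x \<noteq> b" "x \<noteq> c" "x \<noteq> y" "b \<noteq> c" "b \<noteq> x" "b \<noteq> y"
      using distinct by auto
    moreover have "x \<noteq> y1" "x \<noteq> y2" "b \<noteq> x2" "b \<noteq> y2"
      using y1_fresh y2_fresh x2_fresh by auto
    ultimately show "\<not> {b, x} \<subseteq> {b, y, y1}" "\<not> {c, x} \<subseteq> {c, y, y2}"
      "\<not> {b, x} \<subseteq> {c, x, x2}" "\<not> {b, y} \<subseteq> {c, y, y2}"
      by simp_all
  qed
  then have "x1 \<notin> {b, y, y1}" "x2 \<notin> {c, y, y2}" "x1 \<notin> {c, x, x2}" "y1 \<notin> {c, y, y2}"
    using third_vertex_notin_edge[OF x1 y1(1), of b] third_vertex_notin_edge[OF x2 y2(1), of c]
      third_vertex_notin_edge[OF x1 x2(1), of x] third_vertex_notin_edge[OF y1 y2(1), of y] by simp_all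
  then have neq: "x1 \<noteq> y1" "x2 \<noteq> y2" "x1 \<noteq> x2" "y1 \<noteq> y2"
    by simp_all
  have bc_xy: "b \<noteq> x" "b \<noteq> y" "c \<noteq> x" "c \<noteq> y"
    using distinct by simp_all
  have b_edges: "{g \<in> E. b \<in> g} = {{a, b, c}, {b, u1, v1}, {b, u2, v2}, {b, x, x1}, {b, y, y1}}"
    by (rule edges_through_eq[OF abc _ grid(1) _ grid(2) _ x1(1) bc_xy(1) y1(1) bc_xy(2) B_others]) simp_all
  have c_edges: "{g \<in> E. c \<in> g} = {{a, b, c}, {c, u1, u2}, {c, v1, v2}, {c, x, x2}, {c, y, y2}}"
    by (rule edges_through_eq[OF abc _ grid(3) _ grid(4) _ x2(1) bc_xy(3) y2(1) bc_xy(4) C_others]) simp_all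
  show ?thesis
    using grid(1,2) x1(1) y1(1) grid(3,4) x2(1) y2(1) distinct x1_fresh y1_fresh x2_fresh y2_fresh
      neq b_edges c_edges by (rule that)
qed

lemma apex_edge_vertex_cases:
  assumes abc: "{a, b, c} \<in> E" and deg: "degree b = 5" "degree c = 5"
    and b_edges: "{g \<in> E. b \<in> g} = {{a, b, c}, {b, u1, v1}, {b, u2, v2}, {b, x, x1}, {b, y, y1}}"
    and c_edges: "{g \<in> E. c \<in> g} = {{a, b, c}, {c, u1, u2}, {c, v1, v2}, {c, x, x2}, {c, y, y2}}"
    and fresh: "x1 \<noteq> x2" "y1 \<noteq> y2"
    and A: "{a, x, y} \<in> E" and Q: "{a, q, q'} \<in> E" "{a, q, q'} \<noteq> {a, b, c}" "{a, q, q'} \<noteq> {a, x, y}"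
  shows "q \<in> {u1, v1, u2, v2} \<or> (q = x1 \<and> q = y2) \<or> (q = y1 \<and> q = x2)"
proof -
  have "q \<noteq> a"
    using edge_distinct[OF Q(1)] by auto
  then have "q \<notin> {a, b, c}" "q \<notin> {a, x, y}"
    using other_vertex_notin[OF Q(1) abc Q(2), of a q] other_vertex_notin[OF Q(1) A Q(3), of a q]
    by simp_all
  moreover obtain s where "{b, q, s} \<in> E"
    using obtain_edge_through_pendant_vertex[OF abc deg Q(1,2)] .
  then have "q \<in> \<Union>{g \<in> E. b \<in> g}"
    by blast
  then have "q \<in> {a, b, c, u1, v1, u2, v2, x, x1, y, y1}"
    unfolding b_edges by blast
  moreover obtain t where "{c, q, t} \<in> E"
    using obtain_edge_through_pendant_vertex[of a c b q q'] abc deg Q(1,2)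
    by (metis insert_commute)
  then have "q \<in> \<Union>{g \<in> E. c \<in> g}"
    by blast
  then have "q \<in> {a, b, c, u1, v1, u2, v2, x, x2, y, y2}"
    unfolding c_edges by blast
  ultimately show ?thesis
    using fresh by auto
qed

lemma apex_edge_not_mixed:
  assumes abc: "{a, b, c} \<in> E"
    and B: "{b, x, x1} \<in> E" "{b, y, y1} \<in> E" and C: "{c, u1, u2} \<in> E" "{c, v1, v2} \<in> E"
    and distinct: "distinct [a, b, c, u1, v1, u2, v2, x, y]"
    and fresh: "x1 \<notin> {a, b, c, u1, v1, u2, v2, x, y}" "y1 \<notin> {a, b, c, u1, v1, u2, v2, x, y}"
      "x2 \<notin> {a, b, c, u1, v1, u2, v2, x, y}" "y2 \<notin> {a, b, c, u1, v1, u2, v2, x, y}"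
      "x1 \<noteq> y1" "x2 \<noteq> y2"
    and Q: "{a, q, q'} \<in> E" "q' \<in> {u1, v1, u2, v2}" and q: "(q = x1 \<and> q = y2) \<or> (q = y1 \<and> q = x2)"
  shows False
proof -
  have "q' \<noteq> a"
    using Q(2) distinct by auto
  consider "q = x1" "q = y2" | "q = y1" "q = x2"
    using q by blast
  then show False
  proof cases
    case 1
    show False
    proof (cases "q' \<in> {u1, u2}")
      case True
      then show False
        by (intro no_disjoint_pendant_triples[OF abc Q(1) B(2) C(2)]) (use 1 distinct fresh in auto)
    next
      case False
      then show False
        by (intro no_disjoint_pendant_triples[OF abc Q(1) B(2) C(1)]) (use Q(2) 1 distinct fresh in auto)
    qed
  next
    case 2
    show False
    proof (cases "q' \<in> {u1, u2}")
      case True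
      then show False
        by (intro no_disjoint_pendant_triples[OF abc Q(1) B(1) C(2)]) (use 2 distinct fresh in auto)
    next
      case False
      then show False
        by (intro no_disjoint_pendant_triples[OF abc Q(1) B(1) C(1)]) (use Q(2) 2 distinct fresh in auto)
    qed
  qed
qed

lemma apex_edge_in_grid_crossing:
  assumes abc: "{a, b, c} \<in> E"
    and B: "{b, x, x1} \<in> E" "{b, y, y1} \<in> E" and C: "{c, x, x2} \<in> E" "{c, y, y2} \<in> E"
    and distinct: "distinct [a, b, c, u1, v1, u2, v2, x, y]"
    and fresh: "x1 \<notin> {a, b, c, u1, v1, u2, v2, x, y}" "y1 \<notin> {a, b, c, u1, v1, u2, v2, x, y}"
      "x2 \<notin> {a, b, c, u1, v1, u2, v2, x, y}" "y2 \<notin> {a, b, c, u1, v1, u2, v2, x, y}"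
    and Z: "{a, z, w} \<in> E" "z \<in> {u1, v1, u2, v2}" "w \<in> {u1, v1, u2, v2}"
  shows "x1 = y2" "y1 = x2"
proof (rule_tac [!] ccontr)
  assume "x1 \<noteq> y2"
  then show False
    by (intro no_disjoint_pendant_triples[OF abc Z(1) B(1) C(2)]) (use Z(2,3) distinct fresh in auto)
next
  assume "y1 \<noteq> x2"
  then show False
    by (intro no_disjoint_pendant_triples[OF abc Z(1) B(2) C(1)]) (use Z(2,3) distinct fresh in auto)
qed

lemma apex_edge_cases:
  assumes abc: "{a, b, c} \<in> E" and deg: "degree b = 5" "degree c = 5"
    and B: "{b, u1, v1} \<in> E" "{b, u2, v2} \<in> E" "{b, x, x1} \<in> E" "{b, y, y1} \<in> E"
    and C: "{c, u1, u2} \<in> E" "{c, v1, v2} \<in> E" "{c, x, x2} \<in> E" "{c, y, y2} \<in> E"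
    and distinct: "distinct [a, b, c, u1, v1, u2, v2, x, y]"
    and fresh: "x1 \<notin> {a, b, c, u1, v1, u2, v2, x, y}" "y1 \<notin> {a, b, c, u1, v1, u2, v2, x, y}"
      "x2 \<notin> {a, b, c, u1, v1, u2, v2, x, y}" "y2 \<notin> {a, b, c, u1, v1, u2, v2, x, y}"
      "x1 \<noteq> y1" "x2 \<noteq> y2" "x1 \<noteq> x2" "y1 \<noteq> y2"
    and b_edges: "{g \<in> E. b \<in> g} = {{a, b, c}, {b, u1, v1}, {b, u2, v2}, {b, x, x1}, {b, y, y1}}"
    and c_edges: "{g \<in> E. c \<in> g} = {{a, b, c}, {c, u1, u2}, {c, v1, v2}, {c, x, x2}, {c, y, y2}}"
    and A: "{a, x, y} \<in> E" and Z: "{a, z, w} \<in> E" "{a, z, w} \<noteq> {a, b, c}" "{a, z, w} \<noteq> {a, x, y}"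
  shows "x1 = y2 \<and> y1 = x2 \<and> ({z, w} \<subseteq> {u1, v1, u2, v2} \<or> {z, w} = {x1, y1})"
proof -
  note vertex_cases = apex_edge_vertex_cases[OF abc deg b_edges c_edges fresh(7,8) A]
  note not_mixed = apex_edge_not_mixed[OF abc B(3,4) C(1,2) distinct fresh(1-6)]
  have swap: "{a, w, z} = {a, z, w}"
    by (simp add: insert_commute)
  have z_cases: "z \<in> {u1, v1, u2, v2} \<or> (z = x1 \<and> z = y2) \<or> (z = y1 \<and> z = x2)"
    using vertex_cases[OF Z] .
  have w_cases: "w \<in> {u1, v1, u2, v2} \<or> (w = x1 \<and> w = y2) \<or> (w = y1 \<and> w = x2)"
    using vertex_cases[of w z] Z unfolding swap by blast
  consider "z \<in> {u1, v1, u2, v2}" "w \<in> {u1, v1, u2, v2}" | "z \<notin> {u1, v1, u2, v2}" "w \<notin> {u1, v1, u2, v2}"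
    using z_cases w_cases not_mixed[OF Z(1)] not_mixed[of w z] Z(1) unfolding swap by blast
  then show ?thesis
  proof cases
    case 1
    then show ?thesis
      using apex_edge_in_grid_crossing[OF abc B(3,4) C(3,4) distinct fresh(1-4) Z(1)] by blast
  next
    case 2
    then show ?thesis
      using z_cases w_cases edge_distinct[OF Z(1)] fresh(5-8) by auto
  qed
qed

lemma apex_edge_in_grid:
  assumes B: "{b, u1, v1} \<in> E" "{b, u2, v2} \<in> E" and C: "{c, u1, u2} \<in> E" "{c, v1, v2} \<in> E"
    and distinct: "distinct [a, b, c, u1, v1, u2, v2]"
    and Q: "{a, q, q'} \<in> E" "q \<in> {u1, v1, u2, v2}" "q' \<in> {u1, v1, u2, v2}" "q \<noteq> q'"
  shows "{a, u1, v2} \<in> E \<or> {a, v1, u2} \<in> E"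
proof -
  have not_in: "\<not> {q, q'} \<subseteq> G" if "G \<in> E" "a \<notin> G" for G
    using edges_eqI[OF Q(1) that(1) _ _ _ _ Q(4)] that(2) by auto
  have "\<not> {q, q'} \<subseteq> {b, u1, v1}" "\<not> {q, q'} \<subseteq> {b, u2, v2}"
    "\<not> {q, q'} \<subseteq> {c, u1, u2}" "\<not> {q, q'} \<subseteq> {c, v1, v2}"
    using not_in[OF B(1)] not_in[OF B(2)] not_in[OF C(1)] not_in[OF C(2)] distinct by simp_all
  then have "{q, q'} = {u1, v2} \<or> {q, q'} = {v1, u2}"
    using Q(2-4) by auto
  then show ?thesis
    using Q(1) by (auto simp: doubleton_eq_iff insert_commute)
qed

lemma obtain_structure_of_deficient_edge:
  assumes abc: "{a, b, c} \<in> E" and deg: "4 \<le> degree a" "degree b = 5" "degree c = 5"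
  obtains x y u1 v1 u2 v2 x1 y1 where
    "{a, x, y} \<in> E" "{b, u1, v1} \<in> E" "{b, u2, v2} \<in> E" "{b, x, x1} \<in> E" "{b, y, y1} \<in> E"
    "{c, u1, u2} \<in> E" "{c, v1, v2} \<in> E" "{c, x, y1} \<in> E" "{c, y, x1} \<in> E"
    "{a, u1, v2} \<in> E \<or> {a, v1, u2} \<in> E"
    "distinct [a, b, c, u1, v1, u2, v2, x, y, x1, y1]"
    "{g \<in> E. b \<in> g} = {{a, b, c}, {b, u1, v1}, {b, u2, v2}, {b, x, x1}, {b, y, y1}}"
proof -
  have "card {{a, b, c}} < degree a"
    using deg by simp
  then obtain A1 where A1: "A1 \<in> E" "a \<in> A1" "A1 \<notin> {{a, b, c}}"
    by (rule obtain_other_edge_through[OF finite.insertI[OF finite.emptyI]])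
  obtain x y where xy: "A1 = {a, x, y}" "distinct [a, x, y]"
    using obtain_edge_through[OF A1(1,2)] .
  have A: "{a, x, y} \<in> E" "{a, x, y} \<noteq> {a, b, c}"
    using A1 xy(1) by auto
  obtain u1 v1 u2 v2 x1 y1 x2 y2 where
    B: "{b, u1, v1} \<in> E" "{b, u2, v2} \<in> E" "{b, x, x1} \<in> E" "{b, y, y1} \<in> E"
    and C: "{c, u1, u2} \<in> E" "{c, v1, v2} \<in> E" "{c, x, x2} \<in> E" "{c, y, y2} \<in> E"
    and distinct: "distinct [a, b, c, u1, v1, u2, v2, x, y]"
    and fresh: "x1 \<notin> {a, b, c, u1, v1, u2, v2, x, y}" "y1 \<notin> {a, b, c, u1, v1, u2, v2, x, y}"
      "x2 \<notin> {a, b, c, u1, v1, u2, v2, x, y}" "y2 \<notin> {a, b, c, u1, v1, u2, v2, x, y}"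
      "x1 \<noteq> y1" "x2 \<noteq> y2" "x1 \<noteq> x2" "y1 \<noteq> y2"
    and b_edges: "{g \<in> E. b \<in> g} = {{a, b, c}, {b, u1, v1}, {b, u2, v2}, {b, x, x1}, {b, y, y1}}"
    and c_edges: "{g \<in> E. c \<in> g} = {{a, b, c}, {c, u1, u2}, {c, v1, v2}, {c, x, x2}, {c, y, y2}}"
    using obtain_link_of_degree_5_pair[OF abc deg(2,3) A] .
  note cases = apex_edge_cases[OF abc deg(2,3) B C distinct fresh b_edges c_edges A(1)]
  have "card {{a, b, c}, {a, x, y}} < degree a"
    using deg by (simp add: card_insert_if)
  then obtain A2 where A2: "A2 \<in> E" "a \<in> A2" "A2 \<notin> {{a, b, c}, {a, x, y}}"
    by (rule obtain_other_edge_through[OF finite.insertI[OF finite.insertI[OF finite.emptyI]]])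
  obtain z w where zw: "A2 = {a, z, w}" "distinct [a, z, w]"
    using obtain_edge_through[OF A2(1,2)] .
  have "card {{a, b, c}, {a, x, y}, A2} < degree a"
    using deg card_insert_le_m1[of 4 "{{a, x, y}, A2}" "{a, b, c}"] by (simp add: card_insert_if)
  then obtain A3 where A3: "A3 \<in> E" "a \<in> A3" "A3 \<notin> {{a, b, c}, {a, x, y}, A2}"
    by (rule obtain_other_edge_through[OF finite.insertI[OF finite.insertI[OF finite.insertI[OF finite.emptyI]]]])
  obtain z' w' where zw': "A3 = {a, z', w'}" "distinct [a, z', w']"
    using obtain_edge_through[OF A3(1,2)] .
  have "{a, z, w} \<in> E" "{a, z, w} \<noteq> {a, b, c}" "{a, z, w} \<noteq> {a, x, y}"
    using A2 zw(1) by auto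
  note r2 = cases[OF this]
  have "{a, z', w'} \<in> E" "{a, z', w'} \<noteq> {a, b, c}" "{a, z', w'} \<noteq> {a, x, y}"
    using A3 zw'(1) by auto
  then have r3: "{z', w'} \<subseteq> {u1, v1, u2, v2} \<or> {z', w'} = {x1, y1}"
    using cases by blast
  have "distinct [a, b, c, u1, v1, u2, v2]"
    using distinct by simp
  note in_grid = apex_edge_in_grid[OF B(1,2) C(1,2) this]
  have diagonal: "{a, u1, v2} \<in> E \<or> {a, v1, u2} \<in> E"
  proof (cases "{z, w} \<subseteq> {u1, v1, u2, v2}")
    case True
    then show ?thesis
      using in_grid[of z w] A2(1) zw by simp
  next
    case False
    then have "{z, w} = {x1, y1}"
      using r2 by blast
    moreover have "A3 \<noteq> A2"
      using A3(3) by blast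
    ultimately have "{z', w'} \<subseteq> {u1, v1, u2, v2}"
      using r3 zw(1) zw'(1) by auto
    then show ?thesis
      using in_grid[of z' w'] A3(1) zw' by simp
  qed
  have "distinct [a, b, c, u1, v1, u2, v2, x, y, x1, y1]"
    using distinct fresh(1,2,5) by auto
  moreover have "{c, x, y1} \<in> E" "{c, y, x1} \<in> E"
    using C(3,4) r2 by simp_all
  ultimately show ?thesis
    using A(1) B C(1,2) diagonal b_edges by (intro that)
qed

text \<open>In a double square the edges \<open>bpq, cpr, brs, cqs\<close> and \<open>bd\<^sub>1d\<^sub>3, bd\<^sub>2d\<^sub>4, cd\<^sub>1d\<^sub>4, cd\<^sub>2d\<^sub>3\<close>
  form two grids between \<open>b\<close> and \<open>c\<close>, and \<open>a\<close> lies on an edge through a diagonal of each. This is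
  the configuration around a deficient edge \<open>abc\<close>; it leaves no room for a fourth edge at \<open>p\<close>.\<close>

lemma no_edge_through_square_diagonal:
  assumes pq: "{b, p, q} \<in> E" and pr: "{c, p, r} \<in> E"
    and D: "{b, d1, d3} \<in> E" "{b, d2, d4} \<in> E" and diagonal: "{a, p, s} \<in> E \<or> {a, q, r} \<in> E"
    and distinct: "distinct [a, b, c, p, q, r, s, d1, d2, d3, d4]"
    and X: "X \<in> E" "p \<in> X" "s \<in> X" "X \<inter> {a, b, c} = {}"
  shows False
proof -
  have "{a, p, s} \<noteq> X"
    using X(4) by blast
  then have "{a, p, s} \<notin> E"
    using edges_eqI[OF _ X(1), of "{a, p, s}" p s] X(2,3) distinct by auto
  then have aqr: "{a, q, r} \<in> E"
    using diagonal by blast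
  obtain n where n: "X = {p, s, n}" "distinct [p, s, n]"
    using obtain_third_vertex[OF X(1,2,3)] distinct by auto
  have "q \<notin> X" "r \<notin> X"
    using other_vertex_notin[OF pq X(1), of p q] other_vertex_notin[OF pr X(1), of p r] X(2,4)
      distinct by auto
  then have n_fresh: "n \<noteq> a" "n \<noteq> b" "n \<noteq> c" "n \<noteq> q" "n \<noteq> r"
    using X(4) n(1) by auto
  show False
  proof (cases "n \<in> {d1, d3}")
    case False
    show False
      by (rule no_crown[of b p q d1 d3 s n a r])
         (use pq D aqr X(1) n False n_fresh distinct in \<open>auto simp: insert_commute\<close>)
  next
    case True
    then have "n \<notin> {d2, d4}"
      using distinct by auto
    then show False
      by (intro no_crown[of b p q d2 d4 s n a r])
         (use pq D aqr X(1) n n_fresh distinct in \<open>auto simp: insert_commute\<close>)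
  qed
qed

lemma no_edge_through_square_vertex:
  assumes E1: "{b, p, q} \<in> E" "{c, p, r} \<in> E" "{b, r, s} \<in> E" "{c, q, s} \<in> E"
    and E2: "{b, d1, d3} \<in> E" "{b, d2, d4} \<in> E" "{c, d1, d4} \<in> E" "{c, d2, d3} \<in> E"
    and D2: "{a, d1, d2} \<in> E \<or> {a, d3, d4} \<in> E"
    and distinct: "distinct [a, b, c, p, q, r, s, d1, d2, d3, d4]"
    and X: "X \<in> E" "p \<in> X" "s \<notin> X" "X \<inter> {a, b, c} = {}"
  shows False
proof -
  obtain m n where mn: "X = {p, m, n}" "distinct [p, m, n]"
    using obtain_edge_through[OF X(1,2)] .
  have "q \<notin> X" "r \<notin> X"
    using other_vertex_notin[OF E1(1) X(1), of p q] other_vertex_notin[OF E1(2) X(1), of p r] X(2,4)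
      distinct by auto
  then have m: "m \<notin> {a, b, c, q, r, s}" and n: "n \<notin> {a, b, c, q, r, s}"
    using X(3,4) mn(1) by auto
  have meets: "X \<inter> {e, e'} \<noteq> {}"
    if "{h, p, t} \<in> E" "{h, e, e'} \<in> E" "{t, k, k'} \<in> E" "distinct [h, p, t, e, e', k, k']"
      "m \<notin> {h, t, k, k'}" "n \<notin> {h, t, k, k'}" for h t e e' k k'
  proof
    assume "X \<inter> {e, e'} = {}"
    then have "distinct [h, p, t, e, e', m, n, k, k']"
      using that(4-6) mn by auto
    then show False
      using no_crown[of h p t e e' m n k k'] that(1-3) X(1) mn(1) by simp
  qed
  have "X \<inter> {d1, d3} \<noteq> {}" "X \<inter> {d2, d4} \<noteq> {}"
    using meets[OF E1(1) E2(1), of c s] meets[OF E1(1) E2(2), of c s] E1(4) m n distinct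
    by (auto simp: insert_commute)
  moreover have "X \<inter> {d1, d4} \<noteq> {}" "X \<inter> {d2, d3} \<noteq> {}"
    using meets[OF E1(2) E2(3), of b s] meets[OF E1(2) E2(4), of b s] E1(3) m n distinct
    by (auto simp: insert_commute)
  ultimately have "{d1, d2} \<subseteq> X \<or> {d3, d4} \<subseteq> X"
    using mn distinct by auto
  then show False
  proof
    assume d12: "{d1, d2} \<subseteq> X"
    then have "X = {d1, p, d2}"
      using edge_eq_triple[OF X(1), of d1 p d2] X(2) distinct by auto
    moreover have "{a, d1, d2} \<noteq> X"
      using X(4) by blast
    then have "{a, d3, d4} \<in> E"
      using D2 edges_eqI[OF _ X(1), of "{a, d1, d2}" d1 d2] d12 distinct by auto
    ultimately show False
      using no_crown[of b d1 d3 r s p d2 a d4] E1 E2 X(1) distinct by (auto simp: insert_commute)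
  next
    assume d34: "{d3, d4} \<subseteq> X"
    then have "X = {d4, p, d3}"
      using edge_eq_triple[OF X(1), of d4 p d3] X(2) distinct by auto
    moreover have "{a, d3, d4} \<noteq> X"
      using X(4) by blast
    then have "{a, d1, d2} \<in> E"
      using D2 edges_eqI[OF _ X(1), of "{a, d3, d4}" d3 d4] d34 distinct by auto
    ultimately show False
      using no_crown[of b d2 d4 r s a d1 p d3] E1 E2 X(1) distinct by (auto simp: insert_commute)
  qed
qed

lemma degree_le_3_in_double_square:
  assumes E1: "{b, p, q} \<in> E" "{c, p, r} \<in> E" "{b, r, s} \<in> E" "{c, q, s} \<in> E"
    and E2: "{b, d1, d3} \<in> E" "{b, d2, d4} \<in> E" "{c, d1, d4} \<in> E" "{c, d2, d3} \<in> E"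
    and D1: "{a, p, s} \<in> E \<or> {a, q, r} \<in> E" and D2: "{a, d1, d2} \<in> E \<or> {a, d3, d4} \<in> E"
    and distinct: "distinct [a, b, c, p, q, r, s, d1, d2, d3, d4]"
  shows "degree p \<le> 3"
proof (rule ccontr)
  assume "\<not> degree p \<le> 3"
  moreover have "card {a, b, c} \<le> 3"
    by (simp add: card_insert_le_m1)
  ultimately have "card {} + card {a, b, c} < degree p"
    by simp
  moreover have "p \<notin> {a, b, c}"
    using distinct by auto
  ultimately obtain X where X: "X \<in> E" "p \<in> X" "X \<inter> {a, b, c} = {}"
    using obtain_edge_avoiding[of "{a, b, c}" p "{}"] by auto
  show False
  proof (cases "s \<in> X")
    case True
    then show False
      using no_edge_through_square_diagonal[OF E1(1,2) E2(1,2) D1 distinct X(1,2) _ X(3)] by blast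
  next
    case False
    then show False
      using no_edge_through_square_vertex[OF E1 E2 D2 distinct X(1,2) _ X(3)] by blast
  qed
qed

lemma link_vertex_degree_le_3:
  assumes abc: "{a, b, c} \<in> E" and deg: "4 \<le> degree a" "degree b = 5" "degree c = 5"
    and g: "g \<in> E" "b \<in> g" "g \<noteq> {a, b, c}" "p \<in> g" "p \<noteq> b"
  shows "degree p \<le> 3"
proof -
  obtain x y u1 v1 u2 v2 x1 y1 where A: "{a, x, y} \<in> E"
    and B: "{b, u1, v1} \<in> E" "{b, u2, v2} \<in> E" "{b, x, x1} \<in> E" "{b, y, y1} \<in> E"
    and C: "{c, u1, u2} \<in> E" "{c, v1, v2} \<in> E" "{c, x, y1} \<in> E" "{c, y, x1} \<in> E"
    and diagonal: "{a, u1, v2} \<in> E \<or> {a, v1, u2} \<in> E"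
    and distinct: "distinct [a, b, c, u1, v1, u2, v2, x, y, x1, y1]"
    and b_edges: "{g \<in> E. b \<in> g} = {{a, b, c}, {b, u1, v1}, {b, u2, v2}, {b, x, x1}, {b, y, y1}}"
    using obtain_structure_of_deficient_edge[OF abc deg] .
  have "g \<in> {g \<in> E. b \<in> g}"
    using g(1,2) by simp
  then have "p \<in> {u1, v1, u2, v2, x, x1, y, y1}"
    unfolding b_edges using g(3-5) by auto
  then consider "p = u1" | "p = v1" | "p = u2" | "p = v2" | "p = x" | "p = x1" | "p = y" | "p = y1"
    by blast
  then show ?thesis
  proof cases
    case 1
    show ?thesis
      unfolding 1 by (rule degree_le_3_in_double_square[of b u1 v1 c u2 v2 x x1 y y1 a])
        (use A B C diagonal distinct in \<open>auto simp: insert_commute\<close>)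
  next
    case 2
    show ?thesis
      unfolding 2 by (rule degree_le_3_in_double_square[of b v1 u1 c v2 u2 x x1 y y1 a])
        (use A B C diagonal distinct in \<open>auto simp: insert_commute\<close>)
  next
    case 3
    show ?thesis
      unfolding 3 by (rule degree_le_3_in_double_square[of b u2 v2 c u1 v1 x x1 y y1 a])
        (use A B C diagonal distinct in \<open>auto simp: insert_commute\<close>)
  next
    case 4
    show ?thesis
      unfolding 4 by (rule degree_le_3_in_double_square[of b v2 u2 c v1 u1 x x1 y y1 a])
        (use A B C diagonal distinct in \<open>auto simp: insert_commute\<close>)
  next
    case 5
    show ?thesis
      unfolding 5 by (rule degree_le_3_in_double_square[of b x x1 c y1 y u1 v1 v2 u2 a])
        (use A B C diagonal distinct in \<open>auto simp: insert_commute\<close>)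
  next
    case 6
    show ?thesis
      unfolding 6 by (rule degree_le_3_in_double_square[of b x1 x c y y1 u1 v1 v2 u2 a])
        (use A B C diagonal distinct in \<open>auto simp: insert_commute\<close>)
  next
    case 7
    show ?thesis
      unfolding 7 by (rule degree_le_3_in_double_square[of b y y1 c x1 x u1 v1 v2 u2 a])
        (use A B C diagonal distinct in \<open>auto simp: insert_commute\<close>)
  next
    case 8
    show ?thesis
      unfolding 8 by (rule degree_le_3_in_double_square[of b y1 y c x x1 u1 v1 v2 u2 a])
        (use A B C diagonal distinct in \<open>auto simp: insert_commute\<close>)
  qed
qed

section \<open>Discharging\<close>

definition deficient_edges :: "'a set set" where
  "deficient_edges = {g \<in> E. excess g < 0}"

definition tight_edges :: "'a set set" where
  "tight_edges = {g \<in> E. 0 \<le> excess g \<and> excess g < 1/30}"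

lemma deficient_edge_shape:
  "g \<in> deficient_edges \<Longrightarrow>
    -1/15 \<le> excess g \<and> (\<exists>a b c. g = {a, b, c} \<and> 4 \<le> degree a \<and> degree b = 5 \<and> degree c = 5)"
  using excess_cases[of g] unfolding deficient_edges_def by auto

lemma tight_edge_shape:
  "t \<in> tight_edges \<Longrightarrow> \<exists>a b c. t = {a, b, c} \<and> degree a = 3 \<and> degree b = 3 \<and> 6 \<le> degree c"
  using excess_cases[of t] unfolding tight_edges_def by auto

text \<open>A deficient edge is paid for by an edge through one of its degree-5 vertices; the last
  clause makes this vertex recoverable from the paying edge, so that no edge pays twice.\<close>

definition compensates :: "'a set \<Rightarrow> 'a set \<Rightarrow> bool" where
  "compensates g h \<longleftrightarrow> h \<in> E \<and> h \<noteq> g \<and> 1/5 \<le> excess h \<and>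
    (\<exists>b\<in>g \<inter> h. degree b = 5 \<and> card {v \<in> h. degree v = 3} \<le> 2 \<and>
       (\<forall>h'\<in>E. b \<in> h' \<longrightarrow> h' \<noteq> g \<longrightarrow> (\<forall>p\<in>h'. p \<noteq> b \<longrightarrow> degree p \<le> 3)))"

lemma exists_compensating_edge:
  assumes "g \<in> deficient_edges"
  shows "\<exists>h. compensates g h"
proof -
  obtain a b c where abc: "g = {a, b, c}" "4 \<le> degree a" "degree b = 5" "degree c = 5"
    using deficient_edge_shape[OF assms] by blast
  have g: "{a, b, c} \<in> E"
    using assms abc(1) unfolding deficient_edges_def by simp
  have "card {g} < degree b"
    using abc(3) by simp
  then obtain h where h: "h \<in> E" "b \<in> h" "h \<notin> {g}"
    by (rule obtain_other_edge_through[OF finite.insertI[OF finite.emptyI]])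
  obtain p q where pq: "h = {b, p, q}" "distinct [b, p, q]"
    using obtain_edge_through[OF h(1,2)] .
  have link: "\<forall>h'\<in>E. b \<in> h' \<longrightarrow> h' \<noteq> g \<longrightarrow> (\<forall>p\<in>h'. p \<noteq> b \<longrightarrow> degree p \<le> 3)"
    using link_vertex_degree_le_3[OF g abc(2-4)] abc(1) by blast
  then have "degree p \<le> 3" "degree q \<le> 3"
    using h pq by auto
  moreover have "1 \<le> degree p" "1 \<le> degree q"
    using degree_pos[OF h(1)] pq(1) by auto
  ultimately have "1/3 \<le> degree_share (degree p)" "1/3 \<le> degree_share (degree q)"
    using degree_share_ge_third by auto
  moreover have "charge h = degree_share (degree b) + degree_share (degree p) + degree_share (degree q)"
    using pq charge_triple by simp
  moreover have "degree_share (degree b) = 1/5"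
    using abc(3) by (simp add: degree_share_def)
  ultimately have "1/5 \<le> excess h"
    unfolding excess_def by linarith
  moreover have "card {v \<in> h. degree v = 3} \<le> 2"
  proof -
    have "{v \<in> h. degree v = 3} \<subseteq> {p, q}"
      using pq(1) abc(3) by auto
    then have "card {v \<in> h. degree v = 3} \<le> card {p, q}"
      by (intro card_mono) simp_all
    also have "\<dots> \<le> 2"
      by (simp add: card_insert_le_m1)
    finally show ?thesis .
  qed
  ultimately have "compensates g h"
    unfolding compensates_def using h link abc by auto
  then show ?thesis
    by blast
qed

definition partner :: "'a set \<Rightarrow> 'a set" where
  "partner g = (SOME h. compensates g h)"

lemma partner_compensates: "g \<in> deficient_edges \<Longrightarrow> compensates g (partner g)"
  unfolding partner_def using exists_compensating_edge by (metis someI_ex)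

lemma inj_on_partner: "inj_on partner deficient_edges"
proof (rule inj_onI)
  fix g1 g2
  assume g1: "g1 \<in> deficient_edges" and g2: "g2 \<in> deficient_edges" and eq: "partner g1 = partner g2"
  obtain b1 where b1: "b1 \<in> g1" "b1 \<in> partner g1"
    and link: "\<forall>h'\<in>E. b1 \<in> h' \<longrightarrow> h' \<noteq> g1 \<longrightarrow> (\<forall>p\<in>h'. p \<noteq> b1 \<longrightarrow> degree p \<le> 3)"
    using partner_compensates[OF g1] unfolding compensates_def by auto
  obtain b2 where b2: "b2 \<in> g2" "b2 \<in> partner g2" "degree b2 = 5"
    using partner_compensates[OF g2] unfolding compensates_def by auto
  have P: "partner g1 \<in> E" "partner g1 \<noteq> g1"
    using partner_compensates[OF g1] unfolding compensates_def by auto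
  have "b1 = b2"
    using link P b1(2) b2(2,3) eq by force
  show "g1 = g2"
  proof (rule ccontr)
    assume ne: "g1 \<noteq> g2"
    have g2E: "g2 \<in> E"
      using g2 unfolding deficient_edges_def by simp
    obtain p q where "g2 = {b2, p, q}" "distinct [b2, p, q]"
      using obtain_edge_through[OF g2E b2(1)] .
    then have p: "p \<in> g2" "p \<noteq> b1"
      using \<open>b1 = b2\<close> by auto
    have "degree p \<le> 3"
      using link g2E b2(1) \<open>b1 = b2\<close> ne p by auto
    moreover obtain a b c where "g2 = {a, b, c}" "4 \<le> degree a" "degree b = 5" "degree c = 5"
      using deficient_edge_shape[OF g2] by blast
    ultimately show False
      using p(1) by auto
  qed
qed

definition donors :: "'a set \<Rightarrow> 'a set set" where
  "donors t = {g \<in> E. g \<noteq> t \<and> 1/15 \<le> excess g \<and> (\<exists>v\<in>g \<inter> t. degree v = 3)}"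

lemma card_donated_le:
  assumes "g \<in> E"
  shows "card {t \<in> tight_edges. g \<in> donors t} \<le> 2 * card {v \<in> g. degree v = 3}"
proof -
  have "{t \<in> tight_edges. g \<in> donors t} \<subseteq> (\<Union>v\<in>{v \<in> g. degree v = 3}. {h \<in> E. v \<in> h} - {g})"
    unfolding donors_def tight_edges_def by auto
  then have "card {t \<in> tight_edges. g \<in> donors t}
      \<le> card (\<Union>v\<in>{v \<in> g. degree v = 3}. {h \<in> E. v \<in> h} - {g})"
    by (intro card_mono) (auto simp: finite_edge[OF assms] finite_edges_with)
  also have "\<dots> \<le> (\<Sum>v\<in>{v \<in> g. degree v = 3}. card ({h \<in> E. v \<in> h} - {g}))"
    by (rule card_UN_le) (simp add: finite_edge[OF assms])
  also have "\<dots> = (\<Sum>v\<in>{v \<in> g. degree v = 3}. 2)"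
  proof (rule sum.cong)
    fix v
    assume v: "v \<in> {v \<in> g. degree v = 3}"
    then have "g \<in> {h \<in> E. v \<in> h}"
      using assms by simp
    then show "card ({h \<in> E. v \<in> h} - {g}) = 2"
      using v finite_edges_with by (simp add: degree_def)
  qed simp
  finally show ?thesis
    by simp
qed

text \<open>A deficient edge receives \<open>1/15 + c\<^sub>0\<close> from its partner and a tight edge receives \<open>c\<^sub>0/k\<close>
  from each of its donors; afterwards every edge keeps an excess of at least \<open>c\<^sub>0\<close>. The two
  inequalities on \<open>c\<^sub>0\<close> and \<open>k\<close> are what donors and partners need for this.\<close>

lemma excess_covers_transfers:
  fixes c0 k :: real
  assumes c0: "0 \<le> c0" "c0 \<le> 1/30" and k: "0 < k"
    and donor: "c0 + 6 * c0 / k \<le> 1/15" and payer: "2 * c0 + 1/15 + 4 * c0 / k \<le> 1/5"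
    and g: "g \<in> E"
  shows "c0 + (if g \<in> partner ` deficient_edges then 1/15 + c0 else 0)
      + c0 / k * card {t \<in> tight_edges. g \<in> donors t}
    \<le> excess g + (if g \<in> deficient_edges then 1/15 + c0 else 0) + (if g \<in> tight_edges then c0 else 0)"
proof -
  define n where "n = real (card {t \<in> tight_edges. g \<in> donors t})"
  have "card {v \<in> g. degree v = 3} \<le> card g"
    using finite_edge[OF g] by (intro card_mono) auto
  then have n_le: "n \<le> 2 * card {v \<in> g. degree v = 3}" "n \<le> 6"
    using card_donated_le[OF g] card_edge[OF g] unfolding n_def by linarith+
  have n0: "n = 0" if "excess g < 1/15"
    using that unfolding n_def donors_def by simp
  have partner: "1/5 \<le> excess g \<and> card {v \<in> g. degree v = 3} \<le> 2" if "g \<in> partner ` deficient_edges"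
    using that partner_compensates unfolding compensates_def by auto
  have "0 \<le> c0 / k"
    using c0 k by simp
  then have "c0 / k * n \<le> c0 / k * 6" "n \<le> 4 \<Longrightarrow> c0 / k * n \<le> c0 / k * 4"
    using n_le(2) mult_left_mono[of n 6 "c0 / k"] mult_left_mono[of n 4 "c0 / k"] by simp_all
  then have scaled: "c0 / k * n \<le> 6 * c0 / k" "n \<le> 4 \<Longrightarrow> c0 / k * n \<le> 4 * c0 / k"
    by (simp_all add: ac_simps)
  consider "g \<in> deficient_edges" | "g \<in> tight_edges" | "g \<notin> deficient_edges" "g \<notin> tight_edges"
    by blast
  then show ?thesis
  proof cases
    case 1
    then have "-1/15 \<le> excess g" "excess g < 0" "g \<notin> tight_edges"
      using deficient_edge_shape unfolding deficient_edges_def tight_edges_def by auto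
    then show ?thesis
      using 1 partner n0 unfolding n_def by force
  next
    case 2
    then have "0 \<le> excess g" "excess g < 1/30" "g \<notin> deficient_edges"
      unfolding deficient_edges_def tight_edges_def by auto
    then show ?thesis
      using 2 partner n0 unfolding n_def by force
  next
    case 3
    then have "1/30 \<le> excess g"
      using g unfolding deficient_edges_def tight_edges_def by auto
    then show ?thesis
      using 3 partner[THEN conjunct1] partner[THEN conjunct2] n0 n_le(1) scaled c0 donor payer
      unfolding n_def[symmetric] by (cases "g \<in> partner ` deficient_edges"; cases "excess g < 1/15") force+
  qed
qed

lemma sum_indicator_eq:
  fixes a :: real
  assumes "S \<subseteq> E"
  shows "(\<Sum>g\<in>E. if g \<in> S then a else 0) = a * card S"
proof -
  have "(\<Sum>g\<in>E. if g \<in> S then a else 0) = (\<Sum>g\<in>E \<inter> S. a)"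
    by (rule sum.inter_restrict[symmetric]) (rule finite_edges)
  also have "E \<inter> S = S"
    using assms by auto
  finally show ?thesis
    by simp
qed

lemma sum_donated_eq: "(\<Sum>g\<in>E. real (card {t \<in> tight_edges. g \<in> donors t})) = (\<Sum>t\<in>tight_edges. real (card (donors t)))"
proof -
  have "finite tight_edges"
    using finite_edges unfolding tight_edges_def by simp
  then have "(\<Sum>g\<in>E. \<Sum>t\<in>{t \<in> tight_edges. g \<in> donors t}. 1::real)
      = (\<Sum>t\<in>tight_edges. \<Sum>g\<in>{g \<in> E. g \<in> donors t}. 1::real)"
    by (rule sum.swap_restrict[OF finite_edges])
  moreover have "{g \<in> E. g \<in> donors t} = donors t" for t
    unfolding donors_def by auto
  ultimately show ?thesis
    by simp
qed

lemma sum_excess_ge: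
  fixes c0 k :: real
  assumes c0: "0 \<le> c0" "c0 \<le> 1/30" and k: "0 < k"
    and donor: "c0 + 6 * c0 / k \<le> 1/15" and payer: "2 * c0 + 1/15 + 4 * c0 / k \<le> 1/5"
    and enough_donors: "c0 = 0 \<or> (\<forall>t\<in>tight_edges. k \<le> card (donors t))"
  shows "c0 * card E \<le> (\<Sum>g\<in>E. excess g)"
proof -
  let ?donations = "\<Sum>t\<in>tight_edges. real (card (donors t))"
  have sub: "deficient_edges \<subseteq> E" "tight_edges \<subseteq> E" "partner ` deficient_edges \<subseteq> E"
    using partner_compensates unfolding deficient_edges_def tight_edges_def compensates_def by auto
  have transfers: "c0 * card tight_edges \<le> c0 / k * ?donations"
  proof (cases "c0 = 0")
    case False
    then have "(\<Sum>t\<in>tight_edges. k) \<le> ?donations"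
      using enough_donors by (intro sum_mono) auto
    then have "k * card tight_edges \<le> ?donations"
      by (simp add: mult.commute)
    then have "c0 / k * (k * card tight_edges) \<le> c0 / k * ?donations"
      using c0 k by (intro mult_left_mono) auto
    then show ?thesis
      using k by simp
  qed simp
  have "(\<Sum>g\<in>E. c0 + (if g \<in> partner ` deficient_edges then 1/15 + c0 else 0)
        + c0 / k * card {t \<in> tight_edges. g \<in> donors t})
      \<le> (\<Sum>g\<in>E. excess g + (if g \<in> deficient_edges then 1/15 + c0 else 0)
        + (if g \<in> tight_edges then c0 else 0))"
    by (intro sum_mono excess_covers_transfers[OF c0 k donor payer])
  then have "c0 * card E + c0 / k * ?donations \<le> (\<Sum>g\<in>E. excess g) + c0 * card tight_edges"
    unfolding sum.distrib sum_indicator_eq[OF sub(1)] sum_indicator_eq[OF sub(2)]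
      sum_indicator_eq[OF sub(3)] card_image[OF inj_on_partner] sum_distrib_left[symmetric]
      sum_donated_eq
    by (simp add: mult.commute)
  then show ?thesis
    using transfers by linarith
qed

definition big_vertices :: "'a set" where
  "big_vertices = {v \<in> V. 6 \<le> degree v}"

lemma sum_charge_le: "(\<Sum>g\<in>E. charge g) \<le> real (card V) - real (card big_vertices)"
proof -
  have "(\<Sum>g\<in>E. charge g) = (\<Sum>g\<in>E. \<Sum>v\<in>{v \<in> V. v \<in> g}. degree_share (degree v))"
  proof (rule sum.cong)
    fix g
    assume "g \<in> E"
    then have "{v \<in> V. v \<in> g} = g"
      using edge_subset by auto
    then show "charge g = (\<Sum>v\<in>{v \<in> V. v \<in> g}. degree_share (degree v))"
      unfolding charge_def by simp
  qed simp
  also have "\<dots> = (\<Sum>v\<in>V. \<Sum>g\<in>{g \<in> E. v \<in> g}. degree_share (degree v))"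
    by (rule sum.swap_restrict[OF finite_edges finite_vertices])
  also have "\<dots> = (\<Sum>v\<in>V. real (degree v) * degree_share (degree v))"
    by (rule sum.cong) (auto simp: degree_def)
  also have "\<dots> \<le> (\<Sum>v\<in>V. if v \<in> big_vertices then 0 else 1)"
    by (rule sum_mono) (auto simp: degree_share_def big_vertices_def)
  also have "\<dots> = (\<Sum>v\<in>V. if v \<in> V - big_vertices then 1 else 0)"
    by (rule sum.cong) auto
  also have "\<dots> = (\<Sum>v\<in>V \<inter> (V - big_vertices). 1)"
    by (rule sum.inter_restrict[symmetric, OF finite_vertices])
  also have "\<dots> = real (card (V - big_vertices))"
    by (simp add: Int_absorb1)
  also have "\<dots> = real (card V) - real (card big_vertices)"
    using finite_vertices by (simp add: big_vertices_def card_Diff_subset of_nat_diff card_mono)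
  finally show ?thesis .
qed

lemma avoiding_edge_is_donor:
  assumes t: "t = {a, b, c}" "t \<in> E" "degree a = 3" "degree b = 3" "6 \<le> degree c"
    and M: "big_vertices \<subseteq> insert c M"
    and h: "h \<in> E" "h \<noteq> t" "v \<in> {a, b}" "v \<in> h" "h \<inter> M = {}"
  shows "h \<in> donors t"
proof -
  obtain p q where pq: "h = {v, p, q}" "distinct [v, p, q]"
    using obtain_edge_through[OF h(1,4)] .
  have "v \<noteq> c"
    using t h(3) by auto
  then have "c \<notin> h"
    using other_vertex_notin[OF t(2) h(1) h(2)[symmetric], of v c] t(1) h(3,4) by auto
  then have "p \<notin> big_vertices" "q \<notin> big_vertices"
    using M h(5) pq(1) by auto
  moreover have "p \<in> V" "q \<in> V"
    using edge_subset[OF h(1)] pq(1) by auto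
  ultimately have "degree p \<le> 5" "degree q \<le> 5"
    unfolding big_vertices_def by auto
  moreover have "1 \<le> degree p" "1 \<le> degree q"
    using degree_pos[OF h(1)] pq(1) by auto
  ultimately have "1/5 \<le> degree_share (degree p)" "1/5 \<le> degree_share (degree q)"
    using degree_share_ge_fifth by auto
  moreover have "degree v = 3"
    using t h(3) by auto
  then have "degree_share (degree v) = 1/3"
    by (simp add: degree_share_def)
  moreover have "charge h = degree_share (degree v) + degree_share (degree p) + degree_share (degree q)"
    using pq charge_triple by simp
  ultimately have "1/15 \<le> excess h"
    unfolding excess_def by linarith
  then show ?thesis
    unfolding donors_def using h \<open>degree v = 3\<close> t(1) by auto
qed

text \<open>The two edges through each of the two degree-3 vertices of a tight edge are donors unless they
  meet one of the other big vertices, and each big vertex meets at most one of them per vertex.\<close>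

lemma card_donors_ge:
  assumes "t \<in> tight_edges"
  shows "4 - 2 * (real (card big_vertices) - 1) \<le> card (donors t)"
proof -
  obtain a b c where t: "t = {a, b, c}" "degree a = 3" "degree b = 3" "6 \<le> degree c"
    using tight_edge_shape[OF assms] by blast
  have tE: "t \<in> E"
    using assms unfolding tight_edges_def by simp
  have "a \<noteq> b"
    using edge_distinct tE t(1) by auto
  have "c \<in> big_vertices"
    using edge_subset[OF tE] t unfolding big_vertices_def by auto
  define M where "M = big_vertices - {c}"
  have M: "big_vertices \<subseteq> insert c M" "finite M" "a \<notin> M" "b \<notin> M"
    using finite_vertices t(2,3) unfolding M_def big_vertices_def by auto
  have "finite big_vertices"
    using finite_vertices unfolding big_vertices_def by simp
  then have "card M = card big_vertices - 1" "1 \<le> card big_vertices"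
    using \<open>c \<in> big_vertices\<close> unfolding M_def
    by (simp, metis One_nat_def Suc_leI card_gt_0_iff empty_iff)
  then have card_M: "real (card M) = real (card big_vertices) - 1"
    by (simp add: of_nat_diff)
  let ?avoiding = "\<lambda>v. {g \<in> E. v \<in> g \<and> g \<notin> {t} \<and> g \<inter> M = {}}"
  have lower: "2 \<le> card (?avoiding v) + card M" if "v \<in> {a, b}" for v
    using degree_le_card_edges_avoiding[OF M(2) _ finite.insertI[OF finite.emptyI], of v] that M t by auto
  have "?avoiding a \<inter> ?avoiding b = {}"
    using edges_eqI[OF _ tE _ _ _ _ \<open>a \<noteq> b\<close>] t(1) by blast
  then have "card (?avoiding a) + card (?avoiding b) = card (?avoiding a \<union> ?avoiding b)"
    by (simp add: card_Un_disjoint finite_edges_with)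
  also have "\<dots> \<le> card (donors t)"
    using avoiding_edge_is_donor[OF t(1) tE t(2-4) M(1)] finite_edges_with[of "\<lambda>g. g \<in> donors t"]
    by (intro card_mono) (auto simp: donors_def)
  finally show ?thesis
    using lower[of a] lower[of b] card_M by simp
qed

text \<open>With \<open>s\<close> big vertices the charges give \<open>(2/3 + c\<^sub>0) |E| \<le> n - s\<close>, where \<open>c\<^sub>0\<close> is \<open>0\<close>,
  \<open>1/90\<close>, \<open>1/45\<close>, \<open>1/30\<close> for \<open>s \<ge> 3\<close>, \<open>s = 2\<close>, \<open>s = 1\<close>, \<open>s = 0\<close>; each resulting bound on
  \<open>|E|\<close> is at most \<open>3(n - 3)/2\<close> as soon as \<open>n \<ge> 63\<close>.\<close>

lemma card_edges_le:
  assumes "63 \<le> card V"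
  shows "2 * real (card E) \<le> 3 * (real (card V) - 3)"
proof -
  have "(\<Sum>g\<in>E. excess g) = (\<Sum>g\<in>E. charge g) - 2/3 * real (card E)"
    unfolding excess_def by (simp add: sum_subtractf)
  then have upper: "(\<Sum>g\<in>E. excess g) \<le> real (card V) - real (card big_vertices) - 2/3 * real (card E)"
    using sum_charge_le by linarith
  have n: "63 \<le> real (card V)"
    using assms by simp
  consider "3 \<le> card big_vertices" | "card big_vertices = 2" | "card big_vertices = 1"
    | "card big_vertices = 0"
    by linarith
  then show ?thesis
  proof cases
    case 1
    have "0 * real (card E) \<le> (\<Sum>g\<in>E. excess g)"
      by (rule sum_excess_ge[of 0 1]) auto
    then show ?thesis
      using upper 1 by simp
  next
    case 2
    then have "\<forall>t\<in>tight_edges. 2 \<le> real (card (donors t))"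
      using card_donors_ge by fastforce
    then have "1/90 * real (card E) \<le> (\<Sum>g\<in>E. excess g)"
      by (intro sum_excess_ge[of "1/90" 2]) auto
    then show ?thesis
      using upper 2 n by simp
  next
    case 3
    then have "\<forall>t\<in>tight_edges. 4 \<le> real (card (donors t))"
      using card_donors_ge by fastforce
    then have "1/45 * real (card E) \<le> (\<Sum>g\<in>E. excess g)"
      by (intro sum_excess_ge[of "1/45" 4]) auto
    then show ?thesis
      using upper 3 n by simp
  next
    case 4
    have "tight_edges = {}"
    proof (rule equals0I)
      fix t
      assume t: "t \<in> tight_edges"
      then obtain a b c where "t = {a, b, c}" "6 \<le> degree c"
        using tight_edge_shape by blast
      moreover have "t \<subseteq> V"
        using t edge_subset unfolding tight_edges_def by simp
      ultimately have "c \<in> big_vertices"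
        unfolding big_vertices_def by simp
      moreover have "finite big_vertices"
        using finite_vertices unfolding big_vertices_def by simp
      ultimately show False
        using 4 by auto
    qed
    then have "1/30 * real (card E) \<le> (\<Sum>g\<in>E. excess g)"
      by (intro sum_excess_ge[of "1/30" 6]) auto
    then show ?thesis
      using upper 4 n by simp
  qed
qed

end

lemma ex_C13_attained:
  obtains E :: "nat set set"
  where "ex_C13 n = card E" "linear_3graph {..<n} E" "\<not> contains_crown E"
proof -
  let ?sizes = "{card E | E :: nat set set. linear_3graph {..<n} E \<and> \<not> contains_crown E}"
  have "?sizes \<subseteq> card ` Pow (Pow {..<n})"
    unfolding linear_3graph_def by auto
  then have "finite ?sizes"
    by (rule finite_subset) simp
  moreover have "linear_3graph {..<n} ({} :: nat set set)" "\<not> contains_crown ({} :: nat set set)"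
    unfolding linear_3graph_def contains_crown_def by auto
  then have "card ({} :: nat set set) \<in> ?sizes"
    by blast
  ultimately have "ex_C13 n \<in> ?sizes"
    unfolding ex_C13_def using Max_in by blast
  with that show ?thesis
    by blast
qed

theorem corollary1p3:
  fixes n :: nat
  assumes "n \<ge> 63"
  shows "real (ex_C13 n) \<le> 3 * (real n - 3) / 2"
proof -
  obtain E where E: "ex_C13 n = card E" "linear_3graph {..<n} E" "\<not> contains_crown E"
    by (rule ex_C13_attained)
  interpret crown_free_linear_3graph "{..<n}" E
    using E(2,3) by unfold_locales
  show ?thesis
    using card_edges_le assms E(1) by simp
qed

end
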